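(* Let $\mu>0$. There is $K=K(\mu)$ such that for every integer $k\ge K$ the following holds. There exist a $C^2$ function $f:\mathbb{R}\to\mathbb{R}$ with $f'(0)=0$ and numbers $C=C(\mu,k)\in(0,\tfrac25]$ and $t_0=t_0(\mu,k)$ with $t_0-C>0$, such that: (i) $u_1=\cos(kx)f(t)$ solves $\ddot u_1+\operatorname{div}\!\left[\begin{pmatrix}\frac{\mu}{2k^2}&0\\0&1+\frac{\mu}{4k^2}\end{pmatrix}\nabla u_1\right]=-\mu u_1$ for $t\le t_0-C$; (ii) with $u_2=\cos(kx)e^{-k(t-t_0)}$, which solves $\ddot u_2+\operatorname{div}\!\left[\begin{pmatrix}1+\frac{\mu}{k^2}&0\\0&1+\frac{\mu}{4k^2}\end{pmatrix}\nabla u_2\right]=-\mu u_2$, there is a transformation of $u_1$ into $u_2$ within $\mathbb{T}^2\times[t_0-C,t_0]$: a $C^2$ function $u$ and a $C^1$ real $2\times 2$ matrix function $A$ in the regularity class $R(5k^2/\mu,10)$ with $\ddot u+\operatorname{div}(A\nabla u)=-\mu u$ on $\mathbb{T}^2\times\mathbb{R}$, such that $u=u_1$ and $A=\begin{pmatrix}\frac{\mu}{2k^2}&0\\0&1+\frac{\mu}{4k^2}\end{pmatrix}$ for $t\le t_0-C$, and $u=u_2$, $A=\begin{pmatrix}1+\frac{\mu}{k^2}&0\\0&1+\frac{\mu}{4k^2}\end{pmatrix}$ for $t\ge t_0$.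
   Context: $\mathbb{T}^2=(\mathbb{R}/2\pi\mathbb{Z})^2$ with coordinates $(x,y)$; $t$ the third coordinate. $\ddot u+\operatorname{div}(A\nabla u)$ means $\partial_t^2u+\sum_{i,j\in\{x,y\}}\partial_i(A_{ij}\partial_ju)$. Regularity class $R(\Lambda,C)$: $\Lambda^{-1}|\xi|^2\le\xi^TA\xi\le\Lambda|\xi|^2$ for all $\xi\in\mathbb{R}^2$ at every point, and the entries of $A$ are $C^1$ with all first partial derivatives in $x,y,t$ bounded by $C$ in absolute value. *)

theory Defs
  imports "HOL-Analysis.Analysis"
begin

text \<open>Points of T^2 x R are represented as triples (x,y,t) of reals; functions on
  T^2 x R are functions on R^3 that are 2pi-periodic in x and in y.\<close>

type_synonym pt = "real \<times> real \<times> real"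

definition pdx :: "(pt \<Rightarrow> real) \<Rightarrow> pt \<Rightarrow> real" where
  "pdx F = (\<lambda>(x,y,t). deriv (\<lambda>s. F (s,y,t)) x)"
definition pdy :: "(pt \<Rightarrow> real) \<Rightarrow> pt \<Rightarrow> real" where
  "pdy F = (\<lambda>(x,y,t). deriv (\<lambda>s. F (x,s,t)) y)"
definition pdt :: "(pt \<Rightarrow> real) \<Rightarrow> pt \<Rightarrow> real" where
  "pdt F = (\<lambda>(x,y,t). deriv (\<lambda>s. F (x,y,s)) t)"

definition C1_fun :: "(pt \<Rightarrow> real) \<Rightarrow> bool" where
  "C1_fun F \<longleftrightarrow>
     (\<forall>x y t. (\<lambda>s. F (s,y,t)) differentiable (at x) \<and>
              (\<lambda>s. F (x,s,t)) differentiable (at y) \<and>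
              (\<lambda>s. F (x,y,s)) differentiable (at t)) \<and>
     continuous_on UNIV (pdx F) \<and> continuous_on UNIV (pdy F) \<and> continuous_on UNIV (pdt F)"

definition C2_fun :: "(pt \<Rightarrow> real) \<Rightarrow> bool" where
  "C2_fun F \<longleftrightarrow> C1_fun F \<and> C1_fun (pdx F) \<and> C1_fun (pdy F) \<and> C1_fun (pdt F)"

definition C2_real :: "(real \<Rightarrow> real) \<Rightarrow> bool" where
  "C2_real f \<longleftrightarrow> (\<exists>f' f''. (\<forall>t. (f has_real_derivative f' t) (at t)) \<and>
                           (\<forall>t. (f' has_real_derivative f'' t) (at t)) \<and>
                           continuous_on UNIV f'')"

definition torus_periodic :: "(pt \<Rightarrow> real) \<Rightarrow> bool" where
  "torus_periodic F \<longleftrightarrow> (\<forall>x y t. F (x + 2*pi, y, t) = F (x,y,t) \<and> F (x, y + 2*pi, t) = F (x,y,t))"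

definition grad2 :: "(pt \<Rightarrow> real) \<Rightarrow> pt \<Rightarrow> real^2" where
  "grad2 u p = vector [pdx u p, pdy u p]"

definition divA :: "(pt \<Rightarrow> real^2^2) \<Rightarrow> (pt \<Rightarrow> real) \<Rightarrow> pt \<Rightarrow> real" where
  "divA A u p = pdx (\<lambda>q. (A q *v grad2 u q) $ 1) p + pdy (\<lambda>q. (A q *v grad2 u q) $ 2) p"

definition Lop :: "(pt \<Rightarrow> real^2^2) \<Rightarrow> (pt \<Rightarrow> real) \<Rightarrow> pt \<Rightarrow> real" where
  "Lop A u p = pdt (pdt u) p + divA A u p"

definition diagm :: "real \<Rightarrow> real \<Rightarrow> real^2^2" where
  "diagm a b = vector [vector [a, 0], vector [0, b]]"

definition reg_class :: "real \<Rightarrow> real \<Rightarrow> (pt \<Rightarrow> real^2^2) \<Rightarrow> bool" where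
  "reg_class \<Lambda> C A \<longleftrightarrow>
     (\<forall>p \<xi>. inverse \<Lambda> * norm \<xi> ^ 2 \<le> \<xi> \<bullet> (A p *v \<xi>) \<and> \<xi> \<bullet> (A p *v \<xi>) \<le> \<Lambda> * norm \<xi> ^ 2) \<and>
     (\<forall>i j. C1_fun (\<lambda>p. A p $ i $ j) \<and>
        (\<forall>p. \<bar>pdx (\<lambda>q. A q $ i $ j) p\<bar> \<le> C \<and> \<bar>pdy (\<lambda>q. A q $ i $ j) p\<bar> \<le> C \<and>
             \<bar>pdt (\<lambda>q. A q $ i $ j) p\<bar> \<le> C))"

end

theory Submission
  imports Defs
begin

text \<open>The solution is sought in separated form \<open>u = cos (k x) g(t)\<close>, \<open>A = diagm (a(t)) b\<close>, for
  which the equation reduces to the ODE \<open>g'' = (k\<^sup>2 a - \<mu>) g\<close>. Up to a time \<open>t_glue\<close> we take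
  \<open>a = \<mu>/(2k\<^sup>2)\<close> and \<open>g\<close> a cosine of frequency \<open>\<omega> = sqrt (\<mu>/2)\<close>. Afterwards
  \<open>g = exp (- \<integral> prof)\<close> for a profile \<open>prof\<close>, so that \<open>g''/g = prof\<^sup>2 - prof' = ric\<close> and
  \<open>a = (ric + \<mu>)/k\<^sup>2\<close>. The profile rises from \<open>P = 4 sqrt k\<close> to \<open>k\<close> within time \<open>2/5\<close>:
  a Taylor polynomial is blended by a smoothstep, on an interval of length \<open>1/(10 sqrt k)\<close>, into a
  cubic that reaches \<open>k\<close> with vanishing first and second derivatives; from then on
  \<open>g = exp (- k (t - t0))\<close> and \<open>a = 1 + \<mu>/k\<^sup>2\<close>. The 2-jet of the Taylor polynomial is chosen
  so that \<open>ric 0 = - \<mu>/2\<close> and \<open>ric' 0 = 0\<close>, which makes \<open>g\<close> of class \<open>C\<^sup>2\<close> and \<open>a\<close> of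
  class \<open>C\<^sup>1\<close> across \<open>t_glue\<close>, where the logarithmic derivatives \<open>- \<omega> tan (\<omega> t)\<close> and
  \<open>- P\<close> agree. For large \<open>k\<close>, elementary estimates give \<open>- \<mu>/2 \<le> ric \<le> 2k\<^sup>2\<close> and
  \<open>\<bar>ric'\<bar> \<le> 10k\<^sup>2\<close>, hence \<open>\<mu>/(5k\<^sup>2) \<le> a \<le> 3\<close> and \<open>\<bar>a'\<bar> \<le> 10\<close>.\<close>

lemma has_real_derivative_if_le:
  fixes f1 f2 f1' f2' :: "real \<Rightarrow> real"
  assumes d1: "\<And>x. x \<le> a \<Longrightarrow> (f1 has_real_derivative f1' x) (at x)"
      and d2: "\<And>x. x \<ge> a \<Longrightarrow> (f2 has_real_derivative f2' x) (at x)"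
      and e0: "f1 a = f2 a" and e1: "f1' a = f2' a"
  shows "((\<lambda>x. if x \<le> a then f1 x else f2 x) has_real_derivative
      (if x \<le> a then f1' x else f2' x)) (at x)"
proof -
  let ?h = "\<lambda>x. if x \<le> a then f1 x else f2 x"
  consider "x < a" | "x > a" | "x = a" by linarith
  then show ?thesis
  proof cases
    case 1
    have "(?h has_real_derivative f1' x) (at x)"
      by (rule has_field_derivative_transform_within_open[OF d1[of x] open_lessThan[of a]]) (use 1 in auto)
    then show ?thesis using 1 by simp
  next
    case 2
    have "(?h has_real_derivative f2' x) (at x)"
      by (rule has_field_derivative_transform_within_open[OF d2[of x] open_greaterThan[of a]]) (use 2 in auto)
    then show ?thesis using 2 by simp
  next
    case 3
    have left: "(?h has_real_derivative f1' a) (at a within {..a})"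
      by (rule has_field_derivative_transform_within[OF has_field_derivative_at_within[OF d1[of a]], of 1])
         auto
    have "(f2 has_real_derivative f1' a) (at a)" using d2[of a] e1 by simp
    then have right: "(?h has_real_derivative f1' a) (at a within {a..})"
      by (rule has_field_derivative_transform_within[OF has_field_derivative_at_within, of _ _ _ 1])
         (auto simp: e0)
    have "((\<lambda>y. (?h y - ?h a) / (y - a)) \<longlongrightarrow> f1' a) (at a within ({..a} \<union> {a..}))"
      using left right unfolding has_field_derivative_iff Lim_within_Un by simp
    moreover have "{..a} \<union> {a..} = (UNIV::real set)" by auto
    ultimately have "(?h has_real_derivative f1' a) (at a)"
      unfolding has_field_derivative_iff by simp
    then show ?thesis using 3 by simp
  qed
qed

lemma DERIV_shift_arg: assumes "(f has_real_derivative f' (x - c)) (at (x - c))"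
  shows "((\<lambda>x. f (x - c)) has_real_derivative f' (x - c)) (at x)"
  using DERIV_shift[of f "f' (x - c)" x "- c"] assms by simp

lemma continuous_on_if_le:
  fixes f g :: "real \<Rightarrow> real"
  assumes "continuous_on {..a} f" "continuous_on {a..} g" "f a = g a"
  shows "continuous_on UNIV (\<lambda>x. if x \<le> a then f x else g x)"
  using continuous_on_cases_le[where S=UNIV and h="\<lambda>x. x" and a=a and f=f and g=g] assms
  by (auto simp: atMost_def atLeast_def)

lemma pdx_separated:
  fixes X Y X' :: "real \<Rightarrow> real"
  assumes "\<And>x. (X has_real_derivative X' x) (at x)"
  shows "pdx (\<lambda>(x,y,t). X x * Y t) = (\<lambda>(x,y,t). X' x * Y t)"
  using DERIV_imp_deriv[OF DERIV_cmult_right[OF assms]] by (auto simp: pdx_def)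

lemma pdy_separated: "pdy (\<lambda>(x,y,t). X x * Y t) = (\<lambda>(x,y,t). 0)"
  by (auto simp: pdy_def)

lemma pdt_separated:
  fixes X Y Y' :: "real \<Rightarrow> real"
  assumes "\<And>t. (Y has_real_derivative Y' t) (at t)"
  shows "pdt (\<lambda>(x,y,t). X x * Y t) = (\<lambda>(x,y,t). X x * Y' t)"
  using DERIV_imp_deriv[OF DERIV_cmult[OF assms]] by (auto simp: pdt_def)

lemma continuous_on_separated:
  fixes X Y :: "real \<Rightarrow> real"
  assumes "continuous_on UNIV X" "continuous_on UNIV Y"
  shows "continuous_on UNIV (\<lambda>(x::real,y::real,t::real). X x * Y t)"
proof -
  have "(\<lambda>(x::real,y::real,t::real). X x * Y t) = (\<lambda>p. X (fst p) * Y (snd (snd p)))"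
    by auto
  then show ?thesis
    by (simp only:) (intro continuous_intros continuous_on_compose2[OF assms(1)]
        continuous_on_compose2[OF assms(2)]; simp)
qed

lemma C1_fun_separated:
  fixes X Y X' Y' :: "real \<Rightarrow> real"
  assumes dX: "\<And>x. (X has_real_derivative X' x) (at x)"
      and dY: "\<And>t. (Y has_real_derivative Y' t) (at t)"
      and cX: "continuous_on UNIV X'" and cY: "continuous_on UNIV Y'"
  shows "C1_fun (\<lambda>(x,y,t). X x * Y t)"
proof -
  have cX0: "continuous_on UNIV X" and cY0: "continuous_on UNIV Y"
    using dX dY by (blast intro: DERIV_continuous_on)+
  show ?thesis
    unfolding C1_fun_def pdx_separated[OF dX] pdy_separated pdt_separated[OF dY]
  proof (intro conjI allI)
    fix x y t :: real
    show "(\<lambda>s. case (s, y, t) of (x, y, t) \<Rightarrow> X x * Y t) differentiable at x"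
      using DERIV_cmult_right[OF dX[of x], of "Y t"] by (auto simp: real_differentiable_def)
    show "(\<lambda>s. case (x, s, t) of (x, y, t) \<Rightarrow> X x * Y t) differentiable at y"
      by simp
    show "(\<lambda>s. case (x, y, s) of (x, y, t) \<Rightarrow> X x * Y t) differentiable at t"
      using DERIV_cmult[OF dY[of t], of "X x"] by (auto simp: real_differentiable_def)
  qed (use continuous_on_separated[OF cX cY0] continuous_on_separated[OF cX0 cY] in
      \<open>auto simp: case_prod_unfold\<close>)
qed

lemma C2_fun_separated:
  fixes X Y X' Y' X'' Y'' :: "real \<Rightarrow> real"
  assumes dX: "\<And>x. (X has_real_derivative X' x) (at x)"
      and dY: "\<And>t. (Y has_real_derivative Y' t) (at t)"
      and dX': "\<And>x. (X' has_real_derivative X'' x) (at x)"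
      and dY': "\<And>t. (Y' has_real_derivative Y'' t) (at t)"
      and cX: "continuous_on UNIV X''" and cY: "continuous_on UNIV Y''"
  shows "C2_fun (\<lambda>(x,y,t). X x * Y t)"
proof -
  have "continuous_on UNIV X'" "continuous_on UNIV Y'"
    using dX' dY' by (blast intro: DERIV_continuous_on)+
  moreover have "C1_fun (\<lambda>(x,y,t). (\<lambda>_. 0::real) x * (\<lambda>_. 0::real) t)"
    by (rule C1_fun_separated[where X'="\<lambda>_. 0" and Y'="\<lambda>_. 0"]) auto
  ultimately show ?thesis
    unfolding C2_fun_def pdx_separated[OF dX] pdy_separated pdt_separated[OF dY]
    by (auto intro: C1_fun_separated dX dY dX' dY' cX cY)
qed

lemma C1_fun_time_dependent:
  fixes h h' :: "real \<Rightarrow> real"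
  assumes dh: "\<And>t. (h has_real_derivative h' t) (at t)" and ch: "continuous_on UNIV h'"
  shows "C1_fun (\<lambda>p::pt. h (snd (snd p)))"
    and "pdx (\<lambda>p::pt. h (snd (snd p))) q = 0"
    and "pdy (\<lambda>p::pt. h (snd (snd p))) q = 0"
    and "pdt (\<lambda>p::pt. h (snd (snd p))) q = h' (snd (snd q))"
proof -
  have eq: "(\<lambda>p::pt. h (snd (snd p))) = (\<lambda>(x,y,t). (\<lambda>_. 1::real) x * h t)"
    by auto
  have d1: "\<And>x. ((\<lambda>_. 1::real) has_real_derivative 0) (at x)" by simp
  show "C1_fun (\<lambda>p::pt. h (snd (snd p)))"
    unfolding eq by (rule C1_fun_separated[OF d1 dh]) (auto intro: ch)
  show "pdx (\<lambda>p::pt. h (snd (snd p))) q = 0"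
    "pdy (\<lambda>p::pt. h (snd (snd p))) q = 0"
    "pdt (\<lambda>p::pt. h (snd (snd p))) q = h' (snd (snd q))"
    unfolding eq pdx_separated[OF d1] pdy_separated pdt_separated[OF dh]
    by (auto simp: case_prod_beta)
qed

lemma diagm_mult_vec:
  "(diagm \<alpha> \<beta> *v v) $ 1 = \<alpha> * v $ 1" "(diagm \<alpha> \<beta> *v v) $ 2 = \<beta> * v $ 2"
  by (simp_all add: diagm_def matrix_vector_mult_def sum_2)

lemma diagm_nth:
  "diagm \<alpha> \<beta> $ 1 $ 1 = \<alpha>" "diagm \<alpha> \<beta> $ 1 $ 2 = 0"
  "diagm \<alpha> \<beta> $ 2 $ 1 = 0" "diagm \<alpha> \<beta> $ 2 $ 2 = \<beta>"
  by (simp_all add: diagm_def)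

lemma inner_diagm_mult_vec: "(\<xi>::real^2) \<bullet> (diagm \<alpha> \<beta> *v \<xi>) = \<alpha> * \<xi>$1 ^ 2 + \<beta> * \<xi>$2 ^ 2"
  by (simp add: inner_vec_def sum_2 diagm_mult_vec power2_eq_square)

lemma norm_vec2_power2: "norm (\<xi>::real^2) ^ 2 = \<xi>$1 ^ 2 + \<xi>$2 ^ 2"
  unfolding power2_norm_eq_inner by (simp add: inner_vec_def sum_2 power2_eq_square)

lemma reg_class_diagm:
  fixes a a' :: "real \<Rightarrow> real" and b \<Lambda> L :: real
  assumes da: "\<And>t. (a has_real_derivative a' t) (at t)" and ca: "continuous_on UNIV a'"
      and a_lower: "\<And>t. inverse \<Lambda> \<le> a t" and a_upper: "\<And>t. a t \<le> \<Lambda>"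
      and b_lower: "inverse \<Lambda> \<le> b" and b_upper: "b \<le> \<Lambda>"
      and a'_bound: "\<And>t. \<bar>a' t\<bar> \<le> L" and L: "0 \<le> L"
  shows "reg_class \<Lambda> L (\<lambda>p. diagm (a (snd (snd p))) b)"
proof -
  have ellipticity: "inverse \<Lambda> * norm \<xi> ^ 2 \<le> \<xi> \<bullet> (diagm (a t) b *v \<xi>) \<and>
      \<xi> \<bullet> (diagm (a t) b *v \<xi>) \<le> \<Lambda> * norm \<xi> ^ 2" for t and \<xi> :: "real^2"
    unfolding norm_vec2_power2 inner_diagm_mult_vec
    using mult_right_mono[OF a_lower[of t], of "\<xi>$1 ^ 2"] mult_right_mono[OF b_lower, of "\<xi>$2 ^ 2"]
      mult_right_mono[OF a_upper[of t], of "\<xi>$1 ^ 2"] mult_right_mono[OF b_upper, of "\<xi>$2 ^ 2"]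
    by (simp add: algebra_simps)
  have entries: "C1_fun (\<lambda>p. diagm (a (snd (snd p))) b $ i $ j) \<and>
        (\<forall>p. \<bar>pdx (\<lambda>q. diagm (a (snd (snd q))) b $ i $ j) p\<bar> \<le> L \<and>
             \<bar>pdy (\<lambda>q. diagm (a (snd (snd q))) b $ i $ j) p\<bar> \<le> L \<and>
             \<bar>pdt (\<lambda>q. diagm (a (snd (snd q))) b $ i $ j) p\<bar> \<le> L)" for i j :: 2
  proof -
    have dc: "\<And>c::real. \<And>t. ((\<lambda>_. c) has_real_derivative 0) (at t)" by simp
    note ta = C1_fun_time_dependent[OF da ca]
    note tc = C1_fun_time_dependent[OF dc continuous_on_const]
    show ?thesis
      using exhaust_2[of i] exhaust_2[of j]
      by (elim disjE; simp only: diagm_nth) (use ta tc[of 0] tc[of b] a'_bound L in auto)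
  qed
  show ?thesis unfolding reg_class_def using ellipticity entries by blast
qed

lemma Lop_cos_diagm:
  fixes g g' g'' a :: "real \<Rightarrow> real" and \<kappa> b :: real
  assumes dg: "\<And>t. (g has_real_derivative g' t) (at t)"
      and dg': "\<And>t. (g' has_real_derivative g'' t) (at t)"
  shows "Lop (\<lambda>p. diagm (a (snd (snd p))) b) (\<lambda>(x,y,t). cos (\<kappa> * x) * g t) (x,y,t)
       = cos (\<kappa> * x) * (g'' t - \<kappa> ^ 2 * a t * g t)"
proof -
  have dcos: "\<And>x. ((\<lambda>x. cos (\<kappa> * x)) has_real_derivative (- \<kappa> * sin (\<kappa> * x))) (at x)"
    by (auto intro!: derivative_eq_intros)
  have dsin: "\<And>x. ((\<lambda>x. - \<kappa> * sin (\<kappa> * x)) has_real_derivative (- (\<kappa> ^ 2) * cos (\<kappa> * x))) (at x)"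
    by (auto intro!: derivative_eq_intros simp: power2_eq_square)
  let ?u = "\<lambda>(x,y,t). cos (\<kappa> * x) * g t"
  let ?A = "\<lambda>p. diagm (a (snd (snd p))) b"
  note pu = pdx_separated[OF dcos] pdy_separated pdt_separated[OF dg]
  have utt: "pdt (pdt ?u) = (\<lambda>(x,y,t). cos (\<kappa> * x) * g'' t)"
    unfolding pu(3) by (rule pdt_separated[OF dg'])
  have flux1: "(\<lambda>q. (?A q *v grad2 ?u q) $ 1) = (\<lambda>(x,y,t). (- \<kappa> * sin (\<kappa> * x)) * (a t * g t))"
    by (auto simp: grad2_def diagm_mult_vec pu)
  have flux2: "(\<lambda>q. (?A q *v grad2 ?u q) $ 2) = (\<lambda>(x,y,t). (\<lambda>_. 0::real) x * (\<lambda>_. 0::real) t)"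
    by (auto simp: grad2_def diagm_mult_vec pu)
  show ?thesis
    unfolding Lop_def divA_def utt flux1 flux2 pdx_separated[OF dsin, of "\<lambda>t. a t * g t"]
      pdy_separated
    by (simp add: algebra_simps)
qed

lemma Lop_cos_diagm_solution:
  fixes g g' g'' a :: "real \<Rightarrow> real" and \<kappa> b \<mu> :: real
  assumes "\<And>t. (g has_real_derivative g' t) (at t)"
      and "\<And>t. (g' has_real_derivative g'' t) (at t)"
      and "\<And>t. g'' t = (\<kappa> ^ 2 * a t - \<mu>) * g t"
  shows "Lop (\<lambda>p. diagm (a (snd (snd p))) b) (\<lambda>(x,y,t). cos (\<kappa> * x) * g t) p
       = - \<mu> * (\<lambda>(x,y,t). cos (\<kappa> * x) * g t) p"
proof -
  obtain x y t where "p = (x,y,t)" by (cases p)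
  then show ?thesis
    using Lop_cos_diagm[OF assms(1,2), where a=a and b=b and \<kappa>=\<kappa>] assms(3)
    by (simp add: algebra_simps)
qed

lemma C2_real_cos: "C2_real (\<lambda>t. c * cos (\<omega> * t))"
  unfolding C2_real_def
  by (intro exI[of _ "\<lambda>t. - c * \<omega> * sin (\<omega> * t)"] exI[of _ "\<lambda>t. - c * \<omega>^2 * cos (\<omega> * t)"])
    (auto intro!: derivative_eq_intros continuous_intros simp: power2_eq_square)

lemma deriv_scaled_cos_at_0: "deriv (\<lambda>t. c * cos (\<omega> * t)) 0 = 0"
  by (rule DERIV_imp_deriv) (auto intro!: derivative_eq_intros)

lemma Lop_cos_cos_solution:
  fixes \<kappa> \<omega> \<mu> b c :: real
  assumes "\<omega>^2 = \<mu> / 2" "\<kappa> \<noteq> 0"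
  shows "Lop (\<lambda>_. diagm (\<mu> / (2 * \<kappa>^2)) b) (\<lambda>(x,y,t). cos (\<kappa> * x) * (c * cos (\<omega> * t))) p
    = - \<mu> * (\<lambda>(x,y,t). cos (\<kappa> * x) * (c * cos (\<omega> * t))) p"
proof (rule Lop_cos_diagm_solution[where a="\<lambda>_. \<mu> / (2 * \<kappa>^2)"])
  show "((\<lambda>t. c * cos (\<omega> * t)) has_real_derivative - c * \<omega> * sin (\<omega> * t)) (at t)"
    "((\<lambda>t. - c * \<omega> * sin (\<omega> * t)) has_real_derivative - c * \<omega>^2 * cos (\<omega> * t)) (at t)" for t
    by (auto intro!: derivative_eq_intros simp: power2_eq_square)
  show "- c * \<omega>^2 * cos (\<omega> * t) = (\<kappa>^2 * (\<mu> / (2 * \<kappa>^2)) - \<mu>) * (c * cos (\<omega> * t))" for t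
    using assms by (simp add: field_simps)
qed

lemma Lop_cos_exp_solution:
  fixes \<kappa> \<mu> b t0 :: real
  assumes "\<kappa> \<noteq> 0"
  shows "Lop (\<lambda>_. diagm (1 + \<mu> / \<kappa>^2) b) (\<lambda>(x,y,t). cos (\<kappa> * x) * exp (- \<kappa> * (t - t0))) p
    = - \<mu> * (\<lambda>(x,y,t). cos (\<kappa> * x) * exp (- \<kappa> * (t - t0))) p"
proof (rule Lop_cos_diagm_solution[where a="\<lambda>_. 1 + \<mu> / \<kappa>^2"])
  show "((\<lambda>t. exp (- \<kappa> * (t - t0))) has_real_derivative - \<kappa> * exp (- \<kappa> * (t - t0))) (at t)"
    "((\<lambda>t. - \<kappa> * exp (- \<kappa> * (t - t0))) has_real_derivative \<kappa>^2 * exp (- \<kappa> * (t - t0))) (at t)"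
    for t by (auto intro!: derivative_eq_intros simp: power2_eq_square)
  show "\<kappa>^2 * exp (- \<kappa> * (t - t0)) = (\<kappa>^2 * (1 + \<mu> / \<kappa>^2) - \<mu>) * exp (- \<kappa> * (t - t0))" for t
    using assms by (simp add: field_simps)
qed

lemma cos_int_mult_periodic: "cos (real_of_int k * (x + 2 * pi)) = cos (real_of_int k * x)"
proof -
  have "real_of_int k * (x + 2 * pi) = real_of_int k * x + (2 * pi) * real_of_int k"
    by (simp add: algebra_simps)
  then show ?thesis by (simp add: cos_add)
qed

lemma separated_transformation:
  fixes k :: int and g g' g'' a a' :: "real \<Rightarrow> real" and b \<mu> \<Lambda> L :: real
  defines "u \<equiv> \<lambda>(x,y,t). cos (real_of_int k * x) * g t"
      and "A \<equiv> \<lambda>p::pt. diagm (a (snd (snd p))) b"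
  assumes dg: "\<And>t. (g has_real_derivative g' t) (at t)"
      and dg': "\<And>t. (g' has_real_derivative g'' t) (at t)" and cg'': "continuous_on UNIV g''"
      and da: "\<And>t. (a has_real_derivative a' t) (at t)" and ca': "continuous_on UNIV a'"
      and ode: "\<And>t. g'' t = (real_of_int k ^ 2 * a t - \<mu>) * g t"
      and ellipticity: "\<And>t. inverse \<Lambda> \<le> a t" "\<And>t. a t \<le> \<Lambda>" "inverse \<Lambda> \<le> b" "b \<le> \<Lambda>"
      and lipschitz: "\<And>t. \<bar>a' t\<bar> \<le> L" "0 \<le> L"
  shows "C2_fun u" "torus_periodic u" "\<forall>i j. torus_periodic (\<lambda>p. A p $ i $ j)"
    and "reg_class \<Lambda> L A" "\<forall>p. Lop A u p = - \<mu> * u p"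
proof -
  have dcos: "\<And>x. ((\<lambda>x. cos (real_of_int k * x)) has_real_derivative
      (- real_of_int k * sin (real_of_int k * x))) (at x)"
    by (auto intro!: derivative_eq_intros)
  have dsin: "\<And>x. ((\<lambda>x. - real_of_int k * sin (real_of_int k * x)) has_real_derivative
      (- (real_of_int k ^ 2) * cos (real_of_int k * x))) (at x)"
    by (auto intro!: derivative_eq_intros simp: power2_eq_square)
  show "C2_fun u" unfolding u_def
    by (rule C2_fun_separated[OF dcos dg dsin dg']) (auto intro!: continuous_intros cg'')
  show "torus_periodic u" unfolding torus_periodic_def u_def by (simp add: cos_int_mult_periodic)
  show "\<forall>i j. torus_periodic (\<lambda>p. A p $ i $ j)" unfolding torus_periodic_def A_def
    by simp
  show "reg_class \<Lambda> L A" unfolding A_def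
    by (rule reg_class_diagm[OF da ca' ellipticity lipschitz])
  show "\<forall>p. Lop A u p = - \<mu> * u p"
    unfolding A_def u_def using Lop_cos_diagm_solution[OF dg dg' ode] by blast
qed

definition smoothstep :: "real \<Rightarrow> real" where "smoothstep x = 10*x^3 - 15*x^4 + 6*x^5"
definition smoothstep1 :: "real \<Rightarrow> real" where "smoothstep1 x = 30*x^2 - 60*x^3 + 30*x^4"
definition smoothstep2 :: "real \<Rightarrow> real" where "smoothstep2 x = 60*x - 180*x^2 + 120*x^3"

lemma smoothstep_deriv: "(smoothstep has_real_derivative smoothstep1 x) (at x)"
  unfolding smoothstep_def smoothstep1_def by (auto intro!: derivative_eq_intros simp: algebra_simps)
lemma smoothstep1_deriv: "(smoothstep1 has_real_derivative smoothstep2 x) (at x)"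
  unfolding smoothstep1_def smoothstep2_def by (auto intro!: derivative_eq_intros simp: algebra_simps)

lemma smoothstep_bounds:
  assumes "0 \<le> x" "x \<le> 1"
  shows "0 \<le> smoothstep x" "smoothstep x \<le> 1" "0 \<le> smoothstep1 x" "smoothstep1 x \<le> 2"
    and "\<bar>smoothstep2 x\<bar> \<le> 15"
proof -
  have xx: "x*(1-x) \<le> 1/4" using zero_le_power2[of "x - 1/2"]
    by (simp add: algebra_simps power2_eq_square)
  have x0: "0 \<le> x*(1-x)" using assms by simp
  have "smoothstep x = x^3 * (6*(x - 5/4)^2 + 5/8)" unfolding smoothstep_def
    by (simp add: algebra_simps eval_nat_numeral)
  then show "0 \<le> smoothstep x" using assms by simp
  have "1 - smoothstep x = (1-x)^3 * (1 + 3*x + 6*x^2)" unfolding smoothstep_def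
    by (simp add: algebra_simps eval_nat_numeral)
  then show "smoothstep x \<le> 1" using assms by (smt (verit) mult_nonneg_nonneg zero_le_power)
  have c1: "smoothstep1 x = 30 * (x*(1-x))^2" unfolding smoothstep1_def
    by (simp add: algebra_simps eval_nat_numeral)
  then show "0 \<le> smoothstep1 x" by simp
  have "(x*(1-x))^2 \<le> (1/4)^2" using xx x0 by (intro power_mono) auto
  then show "smoothstep1 x \<le> 2" using c1 by (simp add: power2_eq_square algebra_simps)
  have c2: "smoothstep2 x = 60 * (x*(1-x)) * (1 - 2*x)" unfolding smoothstep2_def
    by (simp add: algebra_simps power2_eq_square power3_eq_cube)
  have "\<bar>1 - 2*x\<bar> \<le> 1" using assms by simp
  then have "\<bar>(x*(1-x)) * (1 - 2*x)\<bar> \<le> 1/4 * 1" unfolding abs_mult using xx x0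
    by (intro mult_mono) auto
  then show "\<bar>smoothstep2 x\<bar> \<le> 15" using c2 by (simp add: abs_mult)
qed

lemma smoothstep_ends:
  "smoothstep 0 = 0" "smoothstep1 0 = 0" "smoothstep2 0 = 0"
  "smoothstep 1 = 1" "smoothstep1 1 = 0" "smoothstep2 1 = 0"
  by (simp_all add: smoothstep_def smoothstep1_def smoothstep2_def)

lemma square_mult_one_minus_cube_le:
  assumes "0 \<le> y" "y \<le> (1::real)"
  shows "y^2 * (1 - y^3) \<le> 16/25"
proof (cases "y^2 \<le> 3/5")
  case True
  have "y^2 * (1 - y^3) \<le> 3/5 * 1" using True assms by (intro mult_mono) (auto simp: power_le_one)
  then show ?thesis by simp
next
  case False
  have y2: "y^2 \<le> y" using assms by (simp add: power2_eq_square mult_left_le_one_le)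
  then have "3/5 \<le> y" using False by simp
  then have "3/5 * (3/5) \<le> y * y^2" using False by (intro mult_mono) auto
  then have "1 - y^3 \<le> 16/25" by (simp add: power2_eq_square power3_eq_cube)
  moreover have "y^2 \<le> 1" using assms by (simp add: power_le_one)
  moreover have "y^3 \<le> 1" using assms by (simp add: power_le_one)
  ultimately have "y^2 * (1 - y^3) \<le> 1 * (16/25)" using assms by (intro mult_mono) auto
  then show ?thesis by simp
qed

locale transition =
  fixes k \<mu> :: real
  assumes mu_pos: "0 < \<mu>" and mu_le_k: "\<mu> \<le> k" and k_ge: "10^6 \<le> k"
begin

definition "r = sqrt k"
definition "w2 = \<mu> / 2"
definition "P = 4 * r"
definition "D1 = P^2 + w2"
definition "D2 = 2 * P * D1"
definition "Cc = (2/5::real)"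
definition "l = 1 / (10 * r)"
definition "T s = P + D1 * s + D2 * s^2 / 2"
definition "T1 s = D1 + D2 * s"
definition "S s = k - (k - P) * (1 - s / Cc)^3"
definition "S1 s = 3 * (k - P) * (1 - s / Cc)^2 / Cc"
definition "S2 s = - 6 * (k - P) * (1 - s / Cc) / Cc^2"
definition "B s = T s + smoothstep (s / l) * (S s - T s)"
definition "B1 s = T1 s + smoothstep1 (s / l) / l * (S s - T s) + smoothstep (s / l) * (S1 s - T1 s)"
definition "B2 s = D2 + smoothstep2 (s / l) / l^2 * (S s - T s)
  + 2 * smoothstep1 (s / l) / l * (S1 s - T1 s) + smoothstep (s / l) * (S2 s - D2)"

lemma r_facts: "r^2 = k" "1000 \<le> r" "0 < r"
proof -
  have k0: "0 \<le> k" using k_ge by simp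
  show "r^2 = k" unfolding r_def using k0 by simp
  have "sqrt (10^6) \<le> sqrt k" using k_ge by (rule real_sqrt_le_mono)
  moreover have "sqrt (10^6::real) = 1000" by (simp add: real_sqrt_eq_iff)
  ultimately show "1000 \<le> r" unfolding r_def by simp
  then show "0 < r" by simp
qed

lemma w2_facts: "0 < w2" "w2 \<le> r^2 / 2"
  using mu_pos mu_le_k r_facts(1) unfolding w2_def by auto

lemma l_facts: "0 < l" "l \<le> 1/10000" "l < Cc"
  using r_facts unfolding l_def Cc_def by (auto simp: field_simps)

lemma T_deriv: "(T has_real_derivative T1 s) (at s)"
  unfolding T_def T1_def by (auto intro!: derivative_eq_intros simp: algebra_simps power2_eq_square)
lemma T1_deriv: "(T1 has_real_derivative D2) (at s)"
  unfolding T1_def by (auto intro!: derivative_eq_intros)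
lemma S_deriv: "(S has_real_derivative S1 s) (at s)"
  unfolding S_def S1_def by (auto intro!: derivative_eq_intros simp: field_simps power2_eq_square Cc_def)
lemma S1_deriv: "(S1 has_real_derivative S2 s) (at s)"
  unfolding S1_def S2_def
    by (auto intro!: derivative_eq_intros simp: field_simps power2_eq_square Cc_def)

lemma divide_l_deriv: "((\<lambda>s. s / l) has_real_derivative 1 / l) (at s)"
  using l_facts by (auto intro!: derivative_eq_intros)
lemma smoothstep_scaled_deriv: "((\<lambda>s. smoothstep (s / l)) has_real_derivative smoothstep1 (s / l) / l) (at s)"
  by (rule DERIV_cong[OF DERIV_chain2[OF smoothstep_deriv divide_l_deriv]]) simp
lemma smoothstep1_scaled_deriv: "((\<lambda>s. smoothstep1 (s / l)) has_real_derivative smoothstep2 (s / l) / l) (at s)"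
  by (rule DERIV_cong[OF DERIV_chain2[OF smoothstep1_deriv divide_l_deriv]]) simp

lemma B_deriv: "(B has_real_derivative B1 s) (at s)"
  unfolding B_def[abs_def]
  by (rule DERIV_cong[OF DERIV_add[OF T_deriv
        DERIV_mult[OF smoothstep_scaled_deriv DERIV_diff[OF S_deriv T_deriv]]]])
     (simp add: B1_def algebra_simps)

lemma smoothstep1_scaled_div_deriv: "((\<lambda>s. smoothstep1 (s / l) / l) has_real_derivative smoothstep2 (s / l) / l / l) (at s)"
  by (rule DERIV_cdivide[OF smoothstep1_scaled_deriv])

lemma B1_deriv: "(B1 has_real_derivative B2 s) (at s)"
  unfolding B1_def[abs_def]
  by (rule DERIV_cong[OF DERIV_add[OF DERIV_add[OF T1_deriv
        DERIV_mult[OF smoothstep1_scaled_div_deriv DERIV_diff[OF S_deriv T_deriv]]]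
        DERIV_mult[OF smoothstep_scaled_deriv DERIV_diff[OF S1_deriv T1_deriv]]]])
     (simp add: B2_def algebra_simps power2_eq_square)

definition "S_cap s = (if s \<le> Cc then S s else k)"
definition "S_cap1 s = (if s \<le> Cc then S1 s else 0)"
definition "S_cap2 s = (if s \<le> Cc then S2 s else 0)"
definition "prof s = (if s \<le> l then B s else S_cap s)"
definition "prof1 s = (if s \<le> l then B1 s else S_cap1 s)"
definition "prof2 s = (if s \<le> l then B2 s else S_cap2 s)"

lemma S_end: "S Cc = k" "S1 Cc = 0" "S2 Cc = 0"
  unfolding S_def S1_def S2_def Cc_def by simp_all

lemma B_end: "B l = S l" "B1 l = S1 l" "B2 l = S2 l"
  unfolding B_def B1_def B2_def using l_facts by (simp_all add: smoothstep_ends)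

lemma S_cap_deriv: "(S_cap has_real_derivative S_cap1 s) (at s)"
  unfolding S_cap_def[abs_def] S_cap1_def
  by (rule has_real_derivative_if_le[where f1'=S1 and f2'="\<lambda>_. 0"]) (auto intro: S_deriv simp: S_end)
lemma S_cap1_deriv: "(S_cap1 has_real_derivative S_cap2 s) (at s)"
  unfolding S_cap1_def[abs_def] S_cap2_def
  by (rule has_real_derivative_if_le[where f1'=S2 and f2'="\<lambda>_. 0"]) (auto intro: S1_deriv simp: S_end)

lemma prof_deriv: "(prof has_real_derivative prof1 s) (at s)"
  unfolding prof_def[abs_def] prof1_def
proof (rule has_real_derivative_if_le[where f1'=B1 and f2'=S_cap1])
  show "B l = S_cap l" "B1 l = S_cap1 l" using l_facts by (simp_all add: B_end S_cap_def S_cap1_def)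
qed (rule B_deriv, rule S_cap_deriv)
lemma prof1_deriv: "(prof1 has_real_derivative prof2 s) (at s)"
  unfolding prof1_def[abs_def] prof2_def
proof (rule has_real_derivative_if_le[where f1'=B2 and f2'=S_cap2])
  show "B1 l = S_cap1 l" "B2 l = S_cap2 l" using l_facts by (simp_all add: B_end S_cap1_def S_cap2_def)
qed (rule B1_deriv, rule S_cap1_deriv)

lemma B2_cont: "continuous_on UNIV B2"
proof -
  have "continuous_on UNIV S" "continuous_on UNIV T" "continuous_on UNIV S1" "continuous_on UNIV T1"
    "continuous_on UNIV (\<lambda>s. smoothstep (s/l))" "continuous_on UNIV (\<lambda>s. smoothstep1 (s/l))"
    by (rule DERIV_continuous_on, rule S_deriv T_deriv S1_deriv T1_deriv smoothstep_scaled_deriv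
        smoothstep1_scaled_deriv)+
  then show ?thesis unfolding B2_def[abs_def] S2_def[abs_def] smoothstep2_def
    using l_facts by (intro continuous_intros) (auto simp: Cc_def)
qed

lemma prof2_cont: "continuous_on UNIV prof2"
proof -
  have "continuous_on UNIV S2"
    unfolding S2_def[abs_def] by (intro continuous_intros) (auto simp: Cc_def)
  then have "continuous_on UNIV S_cap2"
    unfolding S_cap2_def[abs_def] by (intro continuous_on_if_le) (auto simp: S_end
        intro: continuous_on_subset)
  then show ?thesis
    unfolding prof2_def[abs_def] using B2_cont l_facts
    by (intro continuous_on_if_le) (auto simp: B_end S_cap2_def intro: continuous_on_subset)
qed

definition "ric s = prof s ^ 2 - prof1 s"
definition "ric1 s = 2 * prof s * prof1 s - prof2 s"

lemma ric_deriv: "(ric has_real_derivative ric1 s) (at s)"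
  unfolding ric_def[abs_def] ric1_def
  by (rule DERIV_cong[OF DERIV_diff[OF DERIV_power[OF prof_deriv] prof1_deriv]]) (simp add: power2_eq_square)

lemma prof_cont: "continuous_on UNIV prof" "continuous_on UNIV prof1"
  using prof_deriv prof1_deriv by (blast intro: DERIV_continuous_on)+

lemma ric1_cont: "continuous_on UNIV ric1"
  unfolding ric1_def[abs_def] using prof_cont prof2_cont by (intro continuous_intros)

lemma PD_facts: "P^2 = 16 * k" "0 \<le> P" "P \<le> k / 250" "D1 = 16*k + w2" "D1 \<le> 33/2 * k" "0 \<le> D1"
  "D2 = 8 * r * D1" "0 \<le> D2"
proof -
  note rf = r_facts
  show "P^2 = 16 * k" unfolding P_def using rf by (simp add: power_mult_distrib)
  show "0 \<le> P" unfolding P_def using rf by simp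
  have "1000 * r \<le> r * r" using rf by (intro mult_right_mono) auto
  then show "P \<le> k / 250" unfolding P_def using rf(1) by (simp add: power2_eq_square)
  show "D1 = 16*k + w2" unfolding D1_def P_def using rf by (simp add: power_mult_distrib)
  then show "D1 \<le> 33/2 * k" "0 \<le> D1" using w2_facts rf by auto
  then show "D2 = 8 * r * D1" "0 \<le> D2" unfolding D2_def P_def using rf by auto
qed

lemma taylor_increment_bounds:
  assumes "0 \<le> s" "s \<le> l"
  shows "0 \<le> D1 * s + D2 * s^2 / 2" "D1 * s + D2 * s^2 / 2 \<le> 231/100 * r"
proof -
  note b = PD_facts and rf = r_facts
  show "0 \<le> D1 * s + D2 * s^2 / 2" using b(6,8) assms
    by (intro add_nonneg_nonneg mult_nonneg_nonneg divide_nonneg_pos) auto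
  have "D1 * s + D2 * s^2 / 2 \<le> D1 * l + D2 * l^2 / 2"
    using b assms by (intro add_mono mult_left_mono divide_right_mono power_mono) auto
  also have "D1 * l + D2 * l^2 / 2 = 7/50 * D1 / r"
    unfolding l_def b(7) using rf by (simp add: field_simps power2_eq_square)
  also have "\<dots> \<le> 7/50 * (33/2 * r^2) / r"
    using b rf by (intro divide_right_mono mult_left_mono) auto
  also have "\<dots> = 231/100 * r" using rf(3) by (simp add: power2_eq_square)
  finally show "D1 * s + D2 * s^2 / 2 \<le> 231/100 * r" .
qed

lemma S_repr: "S s = k - (k - P) * (1 - s/Cc)^3" "S1 s = 15/2 * (k - P) * (1 - s/Cc)^2"
    "S2 s = - 75/2 * (k - P) * (1 - s/Cc)"
  unfolding S_def S1_def S2_def Cc_def by (simp_all add: power2_eq_square field_simps)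

lemma S_bounds:
  assumes "0 \<le> s" "s \<le> Cc"
  shows "P \<le> S s" "S s \<le> k" "0 \<le> S1 s" "S1 s \<le> 15/2 * k" "S2 s \<le> 0" "- S2 s \<le> 75/2 * k"
    and "S s - P \<le> 15/2 * k * s"
proof -
  note b = PD_facts and rf = r_facts
  define y where "y = 1 - s / Cc"
  have y: "0 \<le> y" "y \<le> 1" unfolding y_def using assms by (auto simp: Cc_def)
  have kP: "0 \<le> k - P" using b rf by auto
  have y3: "y^3 \<le> 1" "0 \<le> y^3" using y by (auto simp: power_le_one)
  have y2: "y^2 \<le> 1" "0 \<le> y^2" using y by (auto simp: power_le_one)
  note Se = S_repr[of s, folded y_def]
  have "(k - P) * y^3 \<le> (k - P) * 1" using kP y3 by (intro mult_left_mono) auto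
  then show "P \<le> S s" unfolding Se by simp
  show "S s \<le> k" unfolding Se using kP y3 by simp
  show "0 \<le> S1 s" unfolding Se using kP y2 by simp
  have "(k - P) * y^2 \<le> k * 1" using kP y2 b by (intro mult_mono) auto
  then show "S1 s \<le> 15/2 * k" unfolding Se by (simp add: algebra_simps)
  show "S2 s \<le> 0" unfolding Se using kP y by simp
  have "(k - P) * y \<le> k * 1" using kP y b by (intro mult_mono) auto
  then show "- S2 s \<le> 75/2 * k" unfolding Se by (simp add: algebra_simps)
  have "1 - y^3 \<le> 3 * (s / Cc)"
  proof -
    have id: "\<And>z::real. 1 - (1 - z)^3 = 3 * z - z^2 * (3 - z)"
      by (simp add: algebra_simps power2_eq_square power3_eq_cube)
    have "1 - y^3 = 3 * (s/Cc) - (s/Cc)^2 * (3 - s/Cc)" unfolding y_def by (rule id)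
    moreover have "0 \<le> (s/Cc)^2 * (3 - s/Cc)" using assms by (auto simp: Cc_def)
    ultimately show ?thesis by simp
  qed
  then have "(k - P) * (1 - y^3) \<le> k * (3 * (s / Cc))" using kP y3 b assms
    by (intro mult_mono) (auto simp: Cc_def)
  then show "S s - P \<le> 15/2 * k * s" unfolding Se by (simp add: Cc_def algebra_simps)
qed

lemma smoothstep_scaled_bounds:
  assumes "0 \<le> s" "s \<le> l"
  shows "0 \<le> smoothstep (s/l)" "smoothstep (s/l) \<le> 1"
    and "0 \<le> smoothstep1 (s/l) / l" "smoothstep1 (s/l) / l \<le> 20 * r"
    and "\<bar>smoothstep2 (s/l) / l^2\<bar> \<le> 1500 * r^2"
proof -
  have x: "0 \<le> s/l" "s/l \<le> 1" using assms l_facts by auto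
  note bounds = smoothstep_bounds[OF x]
  have linv: "1 / l = 10 * r" unfolding l_def by simp
  show "0 \<le> smoothstep (s/l)" "smoothstep (s/l) \<le> 1" "0 \<le> smoothstep1 (s/l) / l"
    using bounds l_facts by auto
  have "smoothstep1 (s/l) / l \<le> 2 / l" using bounds l_facts by (intro divide_right_mono) auto
  then show "smoothstep1 (s/l) / l \<le> 20 * r" using linv by simp
  have "\<bar>smoothstep2 (s/l) / l^2\<bar> = \<bar>smoothstep2 (s/l)\<bar> * (1/l)^2"
    by (simp add: abs_mult power2_eq_square)
  also have "\<dots> \<le> 15 * (1/l)^2" using bounds by (intro mult_right_mono) auto
  finally show "\<bar>smoothstep2 (s/l) / l^2\<bar> \<le> 1500 * r^2" using linv
    by (simp add: power2_eq_square)
qed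

lemma T_bounds:
  assumes s: "0 \<le> s" "s \<le> l"
  shows "0 \<le> T1 s" "T1 s \<le> 30 * k" "0 \<le> T s" "T s \<le> 631/100 * r"
    and "S s \<le> T s" "T s - S s \<le> 231/100 * r" "- w2 \<le> T s ^ 2 - T1 s"
    and "\<bar>S1 s - T1 s\<bar> \<le> 30 * k"
proof -
  note b = PD_facts and rf = r_facts
  define E where "E = D1 * s + D2 * s^2 / 2"
  have T_eq: "T s = P + E" by (simp add: T_def E_def)
  have E: "0 \<le> E" "E \<le> 231/100 * r" using taylor_increment_bounds[OF s] by (simp_all add: E_def)
  show T1_ge: "0 \<le> T1 s" unfolding T1_def using b s by simp
  have "D2 * s \<le> D2 * l" using b s by (intro mult_left_mono) auto
  also have "D2 * l = 4/5 * D1" unfolding b(7) l_def using rf by simp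
  finally show T1_le: "T1 s \<le> 30 * k" unfolding T1_def using b by simp
  show "0 \<le> T s" "T s \<le> 631/100 * r" using T_eq E b by (auto simp: P_def)
  have SF: "P \<le> S s" "S s - P \<le> 15/2 * k * s" using S_bounds[of s] s l_facts by auto
  have "15/2 * k * s \<le> D1 * s" using b s w2_facts by (intro mult_right_mono) auto
  moreover have "D1 * s \<le> E" unfolding E_def using b(8) by simp
  ultimately show "S s \<le> T s" using SF T_eq by simp
  show "T s - S s \<le> 231/100 * r" using SF T_eq E by simp
  have "T s ^ 2 - T1 s = - w2 + ((D1^2 + P * D2) * s^2 + D1 * D2 * s^3 + D2^2 * s^4 / 4)"
    unfolding T_def T1_def D2_def D1_def
    by (simp add: algebra_simps power2_eq_square power3_eq_cube power4_eq_xxxx)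
  moreover have "0 \<le> (D1^2 + P * D2) * s^2 + D1 * D2 * s^3 + D2^2 * s^4 / 4"
    using b s by simp
  ultimately show "- w2 \<le> T s ^ 2 - T1 s" by simp
  have "0 \<le> S1 s" "S1 s \<le> 15/2 * k" using S_bounds[of s] s l_facts by auto
  then show "\<bar>S1 s - T1 s\<bar> \<le> 30 * k" using T1_ge T1_le by (simp only: abs_le_iff) linarith
qed

lemma ric_blend:
  assumes "s \<le> l"
  shows "ric s = (1 - smoothstep (s/l)) * (T s ^ 2 - T1 s) + smoothstep (s/l) * (S s ^ 2 - S1 s)
    - smoothstep (s/l) * (1 - smoothstep (s/l)) * (S s - T s)^2 - smoothstep1 (s/l) / l * (S s - T s)"
  using assms unfolding ric_def prof_def prof1_def B_def B1_def
  by (simp add: algebra_simps power2_eq_square)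

lemma ric_lower_blend:
  assumes s: "0 \<le> s" "s \<le> l"
  shows "- w2 \<le> ric s"
proof -
  define c where "c = smoothstep (s/l)"
  define c1 where "c1 = smoothstep1 (s/l) / l"
  define d where "d = S s - T s"
  note cb = smoothstep_scaled_bounds[OF s, folded c_def c1_def]
  note Tb = T_bounds[OF s, folded d_def]
  have SF: "P \<le> S s" "S1 s \<le> 15/2 * k" using S_bounds[of s] s l_facts by auto
  have "- w2 \<le> (1 - c) * (- w2)" using cb w2_facts by (simp add: algebra_simps mult_left_le_one_le)
  also have "\<dots> \<le> (1 - c) * (T s ^ 2 - T1 s)" using cb Tb by (intro mult_left_mono) auto
  finally have taylor_part: "- w2 \<le> (1 - c) * (T s ^ 2 - T1 s)" .
  have "d^2 \<le> (231/100 * r)^2"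
    using Tb by (intro power2_le_iff_abs_le[THEN iffD2] mult_nonneg_nonneg) (auto simp: d_def r_facts less_imp_le)
  also have "\<dots> \<le> 6 * k" using r_facts k_ge by (simp add: power2_eq_square)
  finally have d_sq: "d^2 \<le> 6 * k" .
  have "16 * k \<le> S s ^ 2" using SF PD_facts(1,2) power_mono[of P "S s" 2] by simp
  moreover have "(1 - c) * d^2 \<le> d^2" using cb by (simp add: mult_left_le_one_le)
  ultimately have "(1 - c) * d^2 \<le> S s ^ 2 - S1 s" using SF d_sq k_ge by simp
  then have "c * (1 - c) * d^2 \<le> c * (S s ^ 2 - S1 s)"
    using cb by (simp add: mult.assoc mult_left_mono)
  moreover have "0 \<le> - c1 * d" using cb Tb by (simp add: d_def mult_nonneg_nonpos)
  ultimately show ?thesis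
    using taylor_part ric_blend[OF s(2)] unfolding c_def[symmetric] c1_def[symmetric] d_def[symmetric]
    by linarith
qed

lemma ric_upper_blend:
  assumes s: "0 \<le> s" "s \<le> l"
  shows "ric s \<le> 2 * k^2"
proof -
  define c where "c = smoothstep (s/l)"
  define c1 where "c1 = smoothstep1 (s/l) / l"
  define d where "d = S s - T s"
  note cb = smoothstep_scaled_bounds[OF s, folded c_def c1_def]
  note Tb = T_bounds[OF s, folded d_def]
  have SF: "0 \<le> S s" "S s \<le> k" "0 \<le> S1 s" using S_bounds[of s] s l_facts PD_facts by auto
  have k0: "1000000 \<le> k" and kk: "1000000 * k \<le> k^2"
    using k_ge by (simp_all add: power2_eq_square mult_right_mono)
  have "T s ^ 2 \<le> (631/100 * r)^2" using Tb by (intro power_mono) auto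
  also have "\<dots> \<le> k^2" using r_facts k0 kk by (simp add: power2_eq_square)
  finally have "T s ^ 2 \<le> k^2" .
  then have "(1 - c) * (T s ^ 2 - T1 s) \<le> (1 - c) * k^2"
    by (intro mult_left_mono) (use Tb cb in linarith)+
  moreover have "S s ^ 2 \<le> k^2" using SF by (intro power_mono) auto
  then have "c * (S s ^ 2 - S1 s) \<le> c * k^2"
    by (intro mult_left_mono) (use SF cb in linarith)+
  moreover have "0 \<le> c * (1 - c) * d^2" using cb by simp
  moreover have "c1 * (T s - S s) \<le> (20 * r) * (231/100 * r)"
    using cb Tb by (intro mult_mono) auto
  moreover have "- (c1 * d) = c1 * (T s - S s)" by (simp add: d_def algebra_simps)
  moreover have "(20 * r) * (231/100 * r) \<le> 47 * k" using r_facts k0 by (simp add: power2_eq_square)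
  ultimately have "ric s \<le> (1 - c) * k^2 + c * k^2 + 47 * k"
    using ric_blend[OF s(2)] unfolding c_def[symmetric] c1_def[symmetric] d_def[symmetric]
    by linarith
  then show ?thesis using kk k0 by (simp add: algebra_simps)
qed

lemma B_bounds:
  assumes s: "0 \<le> s" "s \<le> l"
  shows "0 \<le> B s" "B s \<le> 631/100 * r" "\<bar>B1 s\<bar> \<le> 107 * k"
proof -
  define c where "c = smoothstep (s/l)"
  define c1 where "c1 = smoothstep1 (s/l) / l"
  define d where "d = S s - T s"
  note cb = smoothstep_scaled_bounds[OF s, folded c_def c1_def]
  note Tb = T_bounds[OF s, folded d_def]
  have d: "d \<le> 0" "\<bar>d\<bar> \<le> 231/100 * r" using Tb by (auto simp: d_def)
  have "B s = T s + c * d" unfolding B_def c_def d_def ..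
  moreover have "d \<le> c * d" "c * d \<le> 0"
    using cb d mult_left_le_one_le[of "- d" c] by (auto simp: mult_nonneg_nonpos)
  moreover have "P \<le> S s" using S_bounds(1)[of s] s l_facts by simp
  ultimately show "0 \<le> B s" "B s \<le> 631/100 * r"
    using Tb PD_facts(2) by (auto simp: d_def)
  have "\<bar>c1 * d\<bar> \<le> (20 * r) * (231/100 * r)"
    unfolding abs_mult using cb d by (intro mult_mono) auto
  also have "\<dots> \<le> 47 * k" using r_facts k_ge by (simp add: power2_eq_square)
  finally have "\<bar>c1 * d\<bar> \<le> 47 * k" .
  moreover have "B1 s = T1 s + c1 * d + c * (S1 s - T1 s)" unfolding B1_def c_def c1_def d_def ..
  moreover have "\<bar>c * (S1 s - T1 s)\<bar> \<le> 1 * (30 * k)"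
    unfolding abs_mult using cb Tb by (intro mult_mono) auto
  ultimately show "\<bar>B1 s\<bar> \<le> 107 * k" using Tb by linarith
qed

lemma B2_bound:
  assumes s: "0 \<le> s" "s \<le> l"
  shows "\<bar>B2 s\<bar> \<le> 4930 * (r * k)"
proof -
  define c where "c = smoothstep (s/l)"
  define c1 where "c1 = smoothstep1 (s/l) / l"
  define c2 where "c2 = smoothstep2 (s/l) / l^2"
  define d where "d = S s - T s"
  note cb = smoothstep_scaled_bounds[OF s, folded c_def c1_def c2_def]
  note Tb = T_bounds[OF s, folded d_def]
  note b = PD_facts and rf = r_facts
  have k0: "1000000 \<le> k" using k_ge by simp
  have D2b: "D2 \<le> 132 * (r * k)" using b rf by (simp add: mult_left_mono)
  have "\<bar>c2 * d\<bar> \<le> (1500 * r^2) * (231/100 * r)"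
    unfolding abs_mult using cb Tb by (intro mult_mono) (auto simp: d_def)
  also have "\<dots> = 3465 * (r * k)" using rf by (simp add: power2_eq_square)
  finally have t1: "\<bar>c2 * d\<bar> \<le> 3465 * (r * k)" .
  have "\<bar>2 * c1 * (S1 s - T1 s)\<bar> \<le> 2 * (20 * r) * (30 * k)"
    unfolding abs_mult using cb Tb rf by (intro mult_mono) auto
  then have t2: "\<bar>2 * c1 * (S1 s - T1 s)\<bar> \<le> 1200 * (r * k)" by (simp add: algebra_simps)
  have "S2 s \<le> 0" "- S2 s \<le> 75/2 * k" using S_bounds[of s] s l_facts by auto
  moreover have "1000 * k \<le> r * k" using rf k0 by (intro mult_right_mono) auto
  ultimately have "\<bar>S2 s - D2\<bar> \<le> 133 * (r * k)"
    using b(8) D2b by (simp only: abs_le_iff) linarith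
  then have t3: "\<bar>c * (S2 s - D2)\<bar> \<le> 1 * (133 * (r * k))"
    unfolding abs_mult using cb by (intro mult_mono) auto
  have "B2 s = D2 + c2 * d + 2 * c1 * (S1 s - T1 s) + c * (S2 s - D2)"
    unfolding B2_def c_def c1_def c2_def d_def by (simp add: algebra_simps)
  then show ?thesis using t1 t2 t3 D2b b(8) by linarith
qed

lemma ric1_bound_blend:
  assumes s: "0 \<le> s" "s \<le> l"
  shows "\<bar>ric1 s\<bar> \<le> 10 * k^2"
proof -
  note Bb = B_bounds[OF s] B2_bound[OF s] and rf = r_facts
  have "\<bar>ric1 s\<bar> \<le> \<bar>2 * B s * B1 s\<bar> + \<bar>B2 s\<bar>"
    unfolding ric1_def prof_def prof1_def prof2_def using s by (simp add: abs_triangle_ineq4)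
  moreover have "\<bar>2 * B s * B1 s\<bar> \<le> 2 * (631/100 * r) * (107 * k)"
    unfolding abs_mult using Bb by (intro mult_mono) auto
  ultimately have "\<bar>ric1 s\<bar> \<le> 6300 * (r * k)" using Bb(4) by (simp add: algebra_simps)
  moreover have "6300 * r \<le> 10 * k"
    using rf mult_right_mono[of 1000 r r] by (simp add: power2_eq_square)
  then have "6300 * (r * k) \<le> 10 * k^2" using k_ge mult_right_mono[of "6300 * r" "10 * k" k]
    by (simp add: power2_eq_square algebra_simps)
  ultimately show ?thesis by linarith
qed
lemma S_ric_bounds:
  assumes s: "0 \<le> s" "s \<le> Cc"
  shows "- w2 \<le> S s ^ 2 - S1 s" "S s ^ 2 - S1 s \<le> 2 * k^2"
proof -
  note SF = S_bounds[OF s]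
  have "P^2 \<le> S s ^ 2" using SF PD_facts by (intro power_mono) auto
  then show "- w2 \<le> S s ^ 2 - S1 s" using SF PD_facts w2_facts by simp
  have "S s ^ 2 \<le> k^2" using SF PD_facts by (intro power_mono) auto
  then show "S s ^ 2 - S1 s \<le> 2 * k^2" using SF(3) zero_le_power2[of k] by linarith
qed

lemma S_ric1_bound:
  assumes s: "0 \<le> s" "s \<le> Cc"
  shows "\<bar>2 * S s * S1 s - S2 s\<bar> \<le> 10 * k^2"
proof -
  note b = PD_facts
  define y where "y = 1 - s / Cc"
  have y: "0 \<le> y" "y \<le> 1" "y^3 \<le> 1" unfolding y_def using s
    by (auto simp: Cc_def power_le_one)
  have k0: "1000000 \<le> k" using k_ge by simp
  have kP: "0 \<le> k - P" "k - P \<le> k" using b k0 by auto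
  define X where "X = (k - P) * y^2 * (k * (1 - y^3) + P * y^3)"
  define Z where "Z = (k - P) * y"
  have eq: "2 * S s * S1 s - S2 s = 15 * X + 75/2 * Z"
    unfolding X_def Z_def S_repr y_def[symmetric]
      by (simp add: field_simps power2_eq_square power3_eq_cube)
  have t0: "0 \<le> k * (1 - y^3) + P * y^3" using y kP b by simp
  have "0 \<le> X" "0 \<le> Z" unfolding X_def Z_def using y kP t0 by simp_all
  have "X \<le> k * y^2 * (k * (1 - y^3) + P)"
    unfolding X_def using y kP t0 b mult_left_le[of "y^3" P]
    by (intro mult_mono) (auto simp: power_le_one)
  also have "\<dots> = k^2 * (y^2 * (1 - y^3)) + P * k * y^2"
    by (simp add: algebra_simps power2_eq_square)
  also have "\<dots> \<le> k^2 * (16/25) + P * k * 1"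
    using square_mult_one_minus_cube_le[OF y(1,2)] y b k0
      by (intro add_mono mult_left_mono) (auto simp: power_le_one)
  finally have "X \<le> 16/25 * (k * k) + P * k" by (simp add: power2_eq_square)
  moreover have "Z \<le> k" unfolding Z_def using kP y mult_mono[of "k - P" k y 1] by simp
  moreover have "P * k \<le> (k * k) / 250" using b k0 mult_right_mono[of P "k / 250" k] by simp
  moreover have "1000000 * k \<le> k * k" using k0 by (intro mult_right_mono) auto
  ultimately have "15 * X + 75/2 * Z \<le> 10 * (k * k)" using \<open>0 \<le> X\<close> \<open>0 \<le> Z\<close>
    by linarith
  then show ?thesis unfolding eq using \<open>0 \<le> X\<close> \<open>0 \<le> Z\<close>
    by (simp add: power2_eq_square)
qed

lemma prof_eq_k:
  assumes "Cc \<le> s"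
  shows "prof s = k" "prof1 s = 0" "prof2 s = 0" "ric s = k^2" "ric1 s = 0"
proof -
  have "l < s" using assms l_facts by simp
  then show "prof s = k" "prof1 s = 0" "prof2 s = 0" using assms
    by (auto simp: prof_def prof1_def prof2_def S_cap_def S_cap1_def S_cap2_def S_end)
  then show "ric s = k^2" "ric1 s = 0" by (simp_all add: ric_def ric1_def)
qed

lemma prof_at_0: "prof 0 = P" "prof1 0 = D1" "prof2 0 = D2" "ric 0 = - w2" "ric1 0 = 0"
proof -
  have l0: "0 \<le> l" using l_facts by simp
  have "S 0 = P" unfolding S_def by simp
  then show p: "prof 0 = P" "prof1 0 = D1" "prof2 0 = D2" using l0
    by (simp_all add: prof_def prof1_def prof2_def B_def B1_def B2_def smoothstep_ends T_def T1_def)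
  show "ric 0 = - w2" unfolding ric_def p D1_def by simp
  show "ric1 0 = 0" unfolding ric1_def p D2_def by simp
qed

lemma ric_bounds:
  assumes "0 \<le> s"
  shows "- w2 \<le> ric s" "ric s \<le> 2 * k^2" "\<bar>ric1 s\<bar> \<le> 10 * k^2"
proof -
  consider "s \<le> l" | "l < s" "s \<le> Cc" | "Cc \<le> s" by linarith
  then have "- w2 \<le> ric s \<and> ric s \<le> 2 * k^2 \<and> \<bar>ric1 s\<bar> \<le> 10 * k^2"
  proof cases
    case 1
    then show ?thesis using ric_lower_blend ric_upper_blend ric1_bound_blend assms by simp
  next
    case 2
    then have "ric s = S s ^ 2 - S1 s" "ric1 s = 2 * S s * S1 s - S2 s"
      by (simp_all add: ric_def ric1_def prof_def prof1_def prof2_def S_cap_def S_cap1_def S_cap2_def)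
    then show ?thesis using S_ric_bounds S_ric1_bound assms 2 by simp
  next
    case 3
    have "- w2 \<le> k^2" using w2_facts zero_le_power2[of k] by linarith
    then show ?thesis using prof_eq_k[OF 3] by simp
  qed
  then show "- w2 \<le> ric s" "ric s \<le> 2 * k^2" "\<bar>ric1 s\<bar> \<le> 10 * k^2" by auto
qed

text \<open>Integrating from \<open>-1\<close> makes \<open>0\<close> an interior point, so \<open>prof_int\<close> is differentiable there.\<close>

definition "prof_int s = integral {-1..s} prof"

lemma prof_int_deriv: assumes "-1 < s" shows "(prof_int has_real_derivative prof s) (at s)"
proof -
  have c: "continuous_on {-1..s+1} prof" using prof_cont(1) by (rule continuous_on_subset) auto
  have "((\<lambda>x. integral {-1..x} prof) has_real_derivative prof s) (at s within {-1..s+1})"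
    by (rule integral_has_real_derivative[OF c]) (use assms in auto)
  moreover have "at s within {-1..s+1} = at s" by (rule at_within_Icc_at) (use assms in auto)
  ultimately show ?thesis unfolding prof_int_def[abs_def] by simp
qed

lemma prof_int_linear: assumes "Cc \<le> s" shows "prof_int s = prof_int Cc + k * (s - Cc)"
proof (cases "Cc < s")
  case True
  have C0: "0 < Cc" by (simp add: Cc_def)
  have d: "\<And>x. -1 < x \<Longrightarrow> ((\<lambda>x. prof_int x - k * x) has_real_derivative prof x - k) (at x)"
    by (rule DERIV_cong[OF DERIV_diff[OF prof_int_deriv DERIV_cmult[OF DERIV_ident]]]) auto
  have "prof_int s - k * s = prof_int Cc - k * Cc"
  proof (rule DERIV_isconst2[OF True, where f="\<lambda>x. prof_int x - k * x"])
    show "continuous_on {Cc..s} (\<lambda>x. prof_int x - k * x)"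
      by (rule DERIV_continuous_on, rule has_field_derivative_at_within, rule d) (use C0 in auto)
    show "\<And>x. Cc < x \<Longrightarrow> x < s \<Longrightarrow> ((\<lambda>x. prof_int x - k * x) has_real_derivative 0) (at x)"
    proof -
      fix x assume x: "Cc < x" "x < s"
      then have "-1 < x" "prof x = k" using C0 prof_eq_k[of x] by auto
      then show "((\<lambda>x. prof_int x - k * x) has_real_derivative 0) (at x)"
        using d[of x] by simp
    qed
  qed (use True in auto)
  then show ?thesis by (simp add: algebra_simps)
next
  case False
  then have "s = Cc" using assms by simp
  then show ?thesis by simp
qed

definition "decay s = exp (prof_int Cc - prof_int s)"
definition "decay1 s = - prof s * decay s"
definition "decay2 s = ric s * decay s"

lemma decay_deriv: assumes "-1 < s" shows "(decay has_real_derivative decay1 s) (at s)"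
  unfolding decay_def[abs_def] decay1_def decay_def
  by (rule DERIV_cong[OF DERIV_chain2[OF DERIV_exp DERIV_diff[OF DERIV_const prof_int_deriv[OF assms]]]]) simp
lemma decay1_deriv: assumes "-1 < s" shows "(decay1 has_real_derivative decay2 s) (at s)"
  unfolding decay1_def[abs_def] decay2_def
  by (rule DERIV_cong[OF DERIV_mult[OF DERIV_minus[OF prof_deriv] decay_deriv[OF assms]]])
     (simp add: decay1_def ric_def algebra_simps power2_eq_square)

lemma decay2_cont: "continuous_on {0..} decay2"
proof -
  have "continuous_on {0..} decay"
    by (rule DERIV_continuous_on, rule has_field_derivative_at_within, rule decay_deriv) auto
  moreover have "continuous_on {0..} ric"
    by (rule DERIV_continuous_on, rule has_field_derivative_at_within, rule ric_deriv)
  ultimately show ?thesis unfolding decay2_def[abs_def] by (intro continuous_intros)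
qed

lemma decay_exp: assumes "Cc \<le> s" shows "decay s = exp (- k * (s - Cc))"
  unfolding decay_def prof_int_linear[OF assms] by simp

definition "\<omega> = sqrt w2"
definition "t_glue = arctan (P / \<omega>) / \<omega>"
definition "amp = decay 0 / cos (\<omega> * t_glue)"
definition "sol t = (if t \<le> t_glue then amp * cos (\<omega> * t) else decay (t - t_glue))"
definition "sol1 t = (if t \<le> t_glue then - amp * \<omega> * sin (\<omega> * t) else decay1 (t - t_glue))"
definition "sol2 t = (if t \<le> t_glue then - amp * w2 * cos (\<omega> * t) else decay2 (t - t_glue))"
definition "coef t = (if t \<le> t_glue then \<mu> / (2 * k^2) else (ric (t - t_glue) + \<mu>) / k^2)"
definition "coef1 t = (if t \<le> t_glue then 0 else ric1 (t - t_glue) / k^2)"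

lemma omega_facts: "0 < \<omega>" "\<omega>^2 = w2" "\<omega> * t_glue = arctan (P / \<omega>)" "0 < cos (\<omega> * t_glue)"
  "sin (\<omega> * t_glue) = P / \<omega> * cos (\<omega> * t_glue)" "0 < t_glue"
proof -
  show o: "0 < \<omega>" "\<omega>^2 = w2" unfolding \<omega>_def using w2_facts by auto
  show oa: "\<omega> * t_glue = arctan (P / \<omega>)" unfolding t_glue_def using o by simp
  have "0 < 1 + (P / \<omega>)^2" by (metis add_pos_nonneg zero_less_one zero_le_power2)
  then show "0 < cos (\<omega> * t_glue)" unfolding oa by (simp add: cos_arctan)
  have "tan (\<omega> * t_glue) = P / \<omega>" unfolding oa by (simp add: tan_arctan)
  then show "sin (\<omega> * t_glue) = P / \<omega> * cos (\<omega> * t_glue)"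
    unfolding tan_def using \<open>0 < cos (\<omega> * t_glue)\<close> by (simp add: field_simps)
  have "0 < P" using PD_facts r_facts unfolding P_def by simp
  then have "0 < arctan (P / \<omega>)" using o
    by (simp add: arctan_less_zero_iff[symmetric] zero_less_arctan_iff)
  then show "0 < t_glue" unfolding t_glue_def using o by simp
qed

lemma glue_conditions: "amp * cos (\<omega> * t_glue) = decay 0" "- amp * \<omega> * sin (\<omega> * t_glue) = decay1 0"
  "- amp * w2 * cos (\<omega> * t_glue) = decay2 0"
proof -
  note o = omega_facts
  show a: "amp * cos (\<omega> * t_glue) = decay 0" unfolding amp_def using o by simp
  have "- amp * \<omega> * sin (\<omega> * t_glue) = - P * (amp * cos (\<omega> * t_glue))" unfolding o(5) using o
    by (simp add: field_simps)
  then show "- amp * \<omega> * sin (\<omega> * t_glue) = decay1 0" unfolding a decay1_def prof_at_0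
    by simp
  show "- amp * w2 * cos (\<omega> * t_glue) = decay2 0" unfolding decay2_def prof_at_0 a[symmetric]
    by simp
qed

lemma sol_deriv: "(sol has_real_derivative sol1 t) (at t)"
  unfolding sol_def[abs_def] sol1_def
proof (rule has_real_derivative_if_le[where f1'="\<lambda>t. - amp * \<omega> * sin (\<omega> * t)"
      and f2'="\<lambda>t. decay1 (t - t_glue)"])
  show "\<And>x. x \<le> t_glue \<Longrightarrow> ((\<lambda>t. amp * cos (\<omega> * t)) has_real_derivative - amp * \<omega> * sin (\<omega> * x)) (at x)"
    by (auto intro!: derivative_eq_intros)
  show "\<And>x. t_glue \<le> x \<Longrightarrow> ((\<lambda>t. decay (t - t_glue)) has_real_derivative decay1 (x - t_glue)) (at x)"
    by (rule DERIV_shift_arg, rule decay_deriv) auto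
qed (use glue_conditions in auto)

lemma sol1_deriv: "(sol1 has_real_derivative sol2 t) (at t)"
  unfolding sol1_def[abs_def] sol2_def
proof (rule has_real_derivative_if_le[where f1'="\<lambda>t. - amp * w2 * cos (\<omega> * t)"
      and f2'="\<lambda>t. decay2 (t - t_glue)"])
  show "\<And>x. x \<le> t_glue \<Longrightarrow> ((\<lambda>t. - amp * \<omega> * sin (\<omega> * t)) has_real_derivative - amp * w2 * cos (\<omega> * x)) (at x)"
    using omega_facts(2) by (auto intro!: derivative_eq_intros simp: power2_eq_square)
  show "\<And>x. t_glue \<le> x \<Longrightarrow> ((\<lambda>t. decay1 (t - t_glue)) has_real_derivative decay2 (x - t_glue)) (at x)"
    by (rule DERIV_shift_arg, rule decay1_deriv) auto
qed (use glue_conditions in auto)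

lemma sol2_cont: "continuous_on UNIV sol2"
proof -
  have "continuous_on {t_glue..} (\<lambda>t. decay2 (t - t_glue))"
    by (rule continuous_on_compose2[OF decay2_cont]) (auto intro!: continuous_intros)
  then show ?thesis unfolding sol2_def[abs_def]
    by (intro continuous_on_if_le) (use glue_conditions in \<open>auto intro!: continuous_intros\<close>)
qed

lemma coef_deriv: "(coef has_real_derivative coef1 t) (at t)"
  unfolding coef_def[abs_def] coef1_def
proof (rule has_real_derivative_if_le[where f1'="\<lambda>t. 0" and f2'="\<lambda>t. ric1 (t - t_glue) / k^2"])
  show "\<And>x. t_glue \<le> x \<Longrightarrow> ((\<lambda>t. (ric (t - t_glue) + \<mu>) / k^2) has_real_derivative ric1 (x - t_glue) / k^2) (at x)"
    by (rule DERIV_cong[OF DERIV_cdivide[OF DERIV_add[OF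
          DERIV_shift_arg[where f=ric and f'=ric1, OF ric_deriv] DERIV_const]]]) simp
  have q0: "ric 0 = - \<mu> / 2" using prof_at_0 by (simp add: w2_def)
  show "\<mu> / (2 * k^2) = (ric (t_glue - t_glue) + \<mu>) / k^2" using q0 k_ge
    by (simp add: field_simps)
qed (use prof_at_0 in auto)

lemma coef1_cont: "continuous_on UNIV coef1"
proof -
  have "continuous_on {t_glue..} (\<lambda>t. ric1 (t - t_glue))"
    by (rule continuous_on_compose2[OF ric1_cont]) (auto intro!: continuous_intros)
  then show ?thesis unfolding coef1_def[abs_def]
    using k_ge by (intro continuous_on_if_le) (auto intro!: continuous_intros simp: prof_at_0)
qed

lemma sol_ode: "sol2 t = (k^2 * coef t - \<mu>) * sol t"
proof -
  have k0: "k^2 \<noteq> 0" using k_ge by simp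
  show ?thesis unfolding sol2_def coef_def sol_def decay2_def using k0 by (auto simp: w2_def field_simps)
qed

lemma sol_left:
  "t \<le> t_glue \<Longrightarrow> sol t = amp * cos (\<omega> * t) \<and> coef t = \<mu> / (2 * k^2)"
  by (simp add: sol_def coef_def)

lemma sol_right:
  assumes "t_glue + Cc \<le> t"
  shows "sol t = exp (- k * (t - (t_glue + Cc))) \<and> coef t = 1 + \<mu> / k^2"
proof -
  have C0: "0 < Cc" by (simp add: Cc_def)
  have t: "\<not> t \<le> t_glue" using assms C0 by simp
  have k0: "k^2 \<noteq> 0" using k_ge by simp
  have "sol t = exp (- k * (t - (t_glue + Cc)))" unfolding sol_def using t decay_exp[of "t - t_glue"] assms
    by (simp add: algebra_simps)
  moreover have "coef t = 1 + \<mu> / k^2" unfolding coef_def using t prof_eq_k[of "t - t_glue"] assms k0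
    by (simp add: field_simps)
  ultimately show ?thesis ..
qed

lemma coef_bounds: "\<mu> / (5 * k^2) \<le> coef t" "coef t \<le> 3" "\<bar>coef1 t\<bar> \<le> 10"
proof -
  have k2: "0 < k^2" using k_ge by simp
  have "k \<le> k^2" using k_ge by (simp add: power2_eq_square)
  then have mk: "\<mu> \<le> k^2" using mu_le_k by simp
  show "\<mu> / (5 * k^2) \<le> coef t"
  proof (cases "t \<le> t_glue")
    case True then show ?thesis using mu_pos k2 by (simp add: coef_def frac_le)
  next
    case False
    then have "- w2 \<le> ric (t - t_glue)" using ric_bounds by simp
    then have "\<mu> / 2 \<le> ric (t - t_glue) + \<mu>" by (simp add: w2_def)
    then have "(\<mu> / 2) / k^2 \<le> (ric (t - t_glue) + \<mu>) / k^2" using k2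
      by (intro divide_right_mono) auto
    moreover have "\<mu> / (5 * k^2) \<le> (\<mu> / 2) / k^2" using mu_pos k2 by (simp add: field_simps)
    ultimately show ?thesis using False unfolding coef_def by simp
  qed
  show "coef t \<le> 3"
  proof (cases "t \<le> t_glue")
    case True
    have "\<mu> \<le> 2 * k^2" using mk k2 by linarith
    then have "\<mu> / (2 * k^2) \<le> 1" using k2 by (simp add: field_simps)
    then show ?thesis using True by (simp add: coef_def)
  next
    case False
    then have "ric (t - t_glue) \<le> 2 * k^2" using ric_bounds by simp
    then have "(ric (t - t_glue) + \<mu>) / k^2 \<le> (3 * k^2) / k^2" using mk k2
      by (intro divide_right_mono) auto
    then show ?thesis using False k2 unfolding coef_def by simp
  qed
  show "\<bar>coef1 t\<bar> \<le> 10"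
  proof (cases "t \<le> t_glue")
    case True then show ?thesis by (simp add: coef1_def)
  next
    case False
    then have "\<bar>ric1 (t - t_glue)\<bar> \<le> 10 * k^2" using ric_bounds by simp
    then show ?thesis using False k2 unfolding coef1_def by (simp add: abs_div pos_divide_le_eq)
  qed
qed

end

lemma transformation_for_large_k:
  fixes \<mu> :: real and k :: int
  assumes "0 < \<mu>" "10^6 \<le> real_of_int k" "\<mu> \<le> real_of_int k"
  shows "\<exists>(f::real \<Rightarrow> real) (C::real) (t0::real).
       C2_real f \<and> deriv f 0 = 0 \<and> 0 < C \<and> C \<le> 2/5 \<and> t0 - C > 0 \<and>
       (let A1 = diagm (\<mu> / (2 * real_of_int k ^ 2)) (1 + \<mu> / (4 * real_of_int k ^ 2));
            A2 = diagm (1 + \<mu> / real_of_int k ^ 2) (1 + \<mu> / (4 * real_of_int k ^ 2));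
            u1 = (\<lambda>(x::real,y::real,t::real). cos (real_of_int k * x) * f t);
            u2 = (\<lambda>(x::real,y::real,t::real). cos (real_of_int k * x) * exp (- real_of_int k * (t - t0)))
        in (\<forall>x y t. t \<le> t0 - C \<longrightarrow> Lop (\<lambda>_. A1) u1 (x,y,t) = - \<mu> * u1 (x,y,t)) \<and>
           (\<forall>x y t. Lop (\<lambda>_. A2) u2 (x,y,t) = - \<mu> * u2 (x,y,t)) \<and>
           (\<exists>(u::pt \<Rightarrow> real) (A::pt \<Rightarrow> real^2^2).
              C2_fun u \<and> torus_periodic u \<and>
              (\<forall>i j. torus_periodic (\<lambda>p. A p $ i $ j)) \<and>
              reg_class (5 * real_of_int k ^ 2 / \<mu>) 10 A \<and>
              (\<forall>p. Lop A u p = - \<mu> * u p) \<and>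
              (\<forall>x y t. t \<le> t0 - C \<longrightarrow> u (x,y,t) = u1 (x,y,t) \<and> A (x,y,t) = A1) \<and>
              (\<forall>x y t. t \<ge> t0 \<longrightarrow> u (x,y,t) = u2 (x,y,t) \<and> A (x,y,t) = A2)))"
proof -
  interpret transition "real_of_int k" \<mu> using assms by unfold_locales
  let ?k = "real_of_int k"
  define t0 where "t0 = t_glue + Cc"
  define b where "b = 1 + \<mu> / (4 * ?k ^ 2)"
  define \<Lambda> where "\<Lambda> = 5 * ?k ^ 2 / \<mu>"
  have "?k \<le> ?k ^ 2" using assms by (simp add: power2_eq_square mult_le_cancel_left1)
  then have k2: "0 < ?k ^ 2" "\<mu> \<le> ?k ^ 2" using assms by (simp, linarith)
  then have "5 \<le> \<Lambda>" using assms by (simp add: \<Lambda>_def field_simps)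
  have coef_ell: "inverse \<Lambda> \<le> coef t" "coef t \<le> \<Lambda>" for t
    using coef_bounds(1,2)[of t] \<open>5 \<le> \<Lambda>\<close> by (simp_all add: \<Lambda>_def)
  have "\<mu> / ?k ^ 2 \<le> 1" "0 \<le> \<mu> / ?k ^ 2" using k2 assms by simp_all
  then have b_ell: "inverse \<Lambda> \<le> b" "b \<le> \<Lambda>" using \<open>5 \<le> \<Lambda>\<close>
    by (simp_all add: \<Lambda>_def b_def)
  note transformed = separated_transformation[where k=k, OF sol_deriv sol1_deriv sol2_cont coef_deriv
      coef1_cont sol_ode coef_ell b_ell coef_bounds(3) zero_le_numeral]
  have t0_pos: "0 < t0 - Cc" and omega_sq: "\<omega>^2 = \<mu> / 2" and k_nonzero: "?k \<noteq> 0"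
    using omega_facts(2,6) k2 by (auto simp: t0_def w2_def)
  show ?thesis
    unfolding Let_def
    by (rule exI[of _ "\<lambda>t. amp * cos (\<omega> * t)"], rule exI[of _ Cc], rule exI[of _ t0],
        intro conjI exI[of _ "\<lambda>(x,y,t). cos (?k * x) * sol t"]
          exI[of _ "\<lambda>p. diagm (coef (snd (snd p))) b"])
      (use t0_pos omega_sq k_nonzero transformed sol_left sol_right Lop_cos_exp_solution[OF k_nonzero] in
        \<open>auto simp: C2_real_cos deriv_scaled_cos_at_0 Lop_cos_cos_solution Cc_def t0_def b_def \<Lambda>_def\<close>)
qed

theorem mainTheorem6:
  fixes \<mu> :: real
  assumes "\<mu> > 0"
  shows "\<exists>K::int. \<forall>k::int. k \<ge> K \<longrightarrow>
    (\<exists>(f::real \<Rightarrow> real) (C::real) (t0::real).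
       C2_real f \<and> deriv f 0 = 0 \<and> 0 < C \<and> C \<le> 2/5 \<and> t0 - C > 0 \<and>
       (let A1 = diagm (\<mu> / (2 * real_of_int k ^ 2)) (1 + \<mu> / (4 * real_of_int k ^ 2));
            A2 = diagm (1 + \<mu> / real_of_int k ^ 2) (1 + \<mu> / (4 * real_of_int k ^ 2));
            u1 = (\<lambda>(x::real,y::real,t::real). cos (real_of_int k * x) * f t);
            u2 = (\<lambda>(x::real,y::real,t::real). cos (real_of_int k * x) * exp (- real_of_int k * (t - t0)))
        in (\<forall>x y t. t \<le> t0 - C \<longrightarrow> Lop (\<lambda>_. A1) u1 (x,y,t) = - \<mu> * u1 (x,y,t)) \<and>
           (\<forall>x y t. Lop (\<lambda>_. A2) u2 (x,y,t) = - \<mu> * u2 (x,y,t)) \<and>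
           (\<exists>(u::pt \<Rightarrow> real) (A::pt \<Rightarrow> real^2^2).
              C2_fun u \<and> torus_periodic u \<and>
              (\<forall>i j. torus_periodic (\<lambda>p. A p $ i $ j)) \<and>
              reg_class (5 * real_of_int k ^ 2 / \<mu>) 10 A \<and>
              (\<forall>p. Lop A u p = - \<mu> * u p) \<and>
              (\<forall>x y t. t \<le> t0 - C \<longrightarrow> u (x,y,t) = u1 (x,y,t) \<and> A (x,y,t) = A1) \<and>
              (\<forall>x y t. t \<ge> t0 \<longrightarrow> u (x,y,t) = u2 (x,y,t) \<and> A (x,y,t) = A2))))"
proof (intro exI[of _ "\<lceil>max (10^6) \<mu>\<rceil>"] allI impI transformation_for_large_k[OF assms])
  fix k :: int
  assume "\<lceil>max (10^6) \<mu>\<rceil> \<le> k"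
  then show "10^6 \<le> real_of_int k" "\<mu> \<le> real_of_int k" by (simp_all add: ceiling_le_iff)
qed

end
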